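(* Let $A$ (in $\mathcal H$) and $B$ (in $\mathcal K$) be closed densely defined operators with $A\dashv B$, with bounded intertwining operator $T$. Then: (i) $\sigma_p(A)\subseteq\sigma_p(B)$ and for every $\lambda\in\sigma_p(A)$, $m_A(\lambda)\le m_B(\lambda)$, where $m_A(\lambda)$ denotes the multiplicity (dimension of the eigenspace) of $\lambda$ as an eigenvalue of $A$; (ii) $\sigma_r(B)\subseteq\sigma_r(A)$; (iii) if $TD(A)=D(B)$, then $\sigma_p(B)=\sigma_p(A)$; (iv) if $T^{-1}$ is bounded (on its domain $R(T)$) and $TD(A)$ is a core for $B$, then $\sigma_p(B)\subseteq\sigma(A)$.
   Context: A bounded operator $T:\mathcal H\to\mathcal K$ is a bounded intertwining operator for $A$ and $B$ if $T D(A)\subseteq D(B)$ and $BT\xi=TA\xi$ for all $\xi\in D(A)$. $A$ is quasi-similar to $B$, written $A\dashv B$, if there is a bounded intertwining operator $T$ for $A$ and $B$ that is injective and whose inverse $T^{-1}$ (defined on $R(T)$) is densely defined, but not necessarily bounded. Spectral notions: $\rho(A)$ = set of $\lambda$ with $A-\lambda I$ injective and $(A-\lambda I)^{-1}$ bounded everywhere defined; $\sigma(A)=\mathbb C\setminus \rho(A)$; $\sigma_p(A)$ = eigenvalues; $\sigma_r(A)$ = set of $\lambda$ with $A-\lambda I$ injective and non-dense range. *)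

theory Defs
  imports "HOL-Analysis.Analysis" "HOL-Library.Extended_Nat"
begin

class complex_vector = real_vector +
  fixes scaleC :: "complex \<Rightarrow> 'a \<Rightarrow> 'a" (infixr \<open>*\<^sub>C\<close> 75)
  assumes scaleC_add_right: "a *\<^sub>C (x + y) = a *\<^sub>C x + a *\<^sub>C y"
    and scaleC_add_left: "(a + b) *\<^sub>C x = a *\<^sub>C x + b *\<^sub>C x"
    and scaleC_scaleC: "a *\<^sub>C (b *\<^sub>C x) = (a * b) *\<^sub>C x"
    and scaleC_one: "1 *\<^sub>C x = x"
    and scaleR_scaleC: "scaleR r x = (complex_of_real r) *\<^sub>C x"

class complex_normed_vector = complex_vector + real_normed_vector +
  assumes norm_scaleC: "norm (a *\<^sub>C x) = cmod a * norm x"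

class complex_inner = complex_normed_vector +
  fixes cinner :: "'a \<Rightarrow> 'a \<Rightarrow> complex"
  assumes cinner_commute: "cinner x y = cnj (cinner y x)"
    and cinner_add_left: "cinner (x + y) z = cinner x z + cinner y z"
    and cinner_scaleC_left: "cinner (a *\<^sub>C x) y = cnj a * cinner x y"
    and cinner_self_real: "Im (cinner x x) = 0"
    and cinner_self_nonneg: "0 \<le> Re (cinner x x)"
    and cinner_self_eq_zero: "cinner x x = 0 \<longleftrightarrow> x = 0"
    and norm_eq_sqrt_cinner: "norm x = sqrt (Re (cinner x x))"

class chilbert_space = complex_inner + complete_space

definition csubspace :: "'a::complex_vector set \<Rightarrow> bool" where
  "csubspace S \<longleftrightarrow> 0 \<in> S \<and> (\<forall>x\<in>S. \<forall>y\<in>S. x + y \<in> S) \<and> (\<forall>c. \<forall>x\<in>S. c *\<^sub>C x \<in> S)"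

definition cindependent :: "'a::complex_vector set \<Rightarrow> bool" where
  "cindependent S \<longleftrightarrow> (\<forall>F u. finite F \<longrightarrow> F \<subseteq> S \<longrightarrow> (\<Sum>x\<in>F. u x *\<^sub>C x) = 0 \<longrightarrow> (\<forall>x\<in>F. u x = 0))"

definition cdim :: "'a::complex_vector set \<Rightarrow> enat" where
  "cdim E = (SUP S \<in> {S. finite S \<and> S \<subseteq> E \<and> cindependent S}. enat (card S))"

text \<open>An operator on \<open>H\<close> is given by a domain \<open>D\<close> and a map \<open>A\<close> (relevant on \<open>D\<close> only).\<close>

definition lin_op :: "'a::complex_vector set \<Rightarrow> ('a \<Rightarrow> 'b::complex_vector) \<Rightarrow> bool" where
  "lin_op D A \<longleftrightarrow> csubspace D \<and> (\<forall>x\<in>D. \<forall>y\<in>D. A (x + y) = A x + A y)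
     \<and> (\<forall>c. \<forall>x\<in>D. A (c *\<^sub>C x) = c *\<^sub>C A x)"

definition graph :: "'a set \<Rightarrow> ('a \<Rightarrow> 'b) \<Rightarrow> ('a \<times> 'b) set" where
  "graph D A = {(x, A x) | x. x \<in> D}"

definition densely_defined :: "'a::complex_normed_vector set \<Rightarrow> bool" where
  "densely_defined D \<longleftrightarrow> closure D = UNIV"

definition closed_op :: "'a::complex_normed_vector set \<Rightarrow> ('a \<Rightarrow> 'b::complex_normed_vector) \<Rightarrow> bool" where
  "closed_op D A \<longleftrightarrow> lin_op D A \<and> closed (graph D A)"

definition cbounded_linear :: "('a::complex_normed_vector \<Rightarrow> 'b::complex_normed_vector) \<Rightarrow> bool" where
  "cbounded_linear T \<longleftrightarrow> (\<forall>x y. T (x + y) = T x + T y) \<and> (\<forall>c x. T (c *\<^sub>C x) = c *\<^sub>C T x)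
     \<and> (\<exists>K. \<forall>x. norm (T x) \<le> norm x * K)"

definition intertwining :: "('a::complex_normed_vector \<Rightarrow> 'b::complex_normed_vector)
     \<Rightarrow> 'a set \<Rightarrow> ('a \<Rightarrow> 'a) \<Rightarrow> 'b set \<Rightarrow> ('b \<Rightarrow> 'b) \<Rightarrow> bool" where
  "intertwining T DA A DB B \<longleftrightarrow> cbounded_linear T \<and> T ` DA \<subseteq> DB \<and> (\<forall>\<xi>\<in>DA. B (T \<xi>) = T (A \<xi>))"

text \<open>\<open>T\<close> witnesses quasi-similarity \<open>A \<dashv> B\<close>: injective, and \<open>T\<^sup>-\<^sup>1\<close> (domain \<open>R(T)\<close>) densely defined.\<close>
definition quasi_sim_witness :: "('a::complex_normed_vector \<Rightarrow> 'b::complex_normed_vector)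
     \<Rightarrow> 'a set \<Rightarrow> ('a \<Rightarrow> 'a) \<Rightarrow> 'b set \<Rightarrow> ('b \<Rightarrow> 'b) \<Rightarrow> bool" where
  "quasi_sim_witness T DA A DB B \<longleftrightarrow> intertwining T DA A DB B \<and> inj T \<and> densely_defined (range T)"

definition quasi_similar :: "'a::complex_normed_vector set \<Rightarrow> ('a \<Rightarrow> 'a)
     \<Rightarrow> 'b::complex_normed_vector set \<Rightarrow> ('b \<Rightarrow> 'b) \<Rightarrow> bool" where
  "quasi_similar DA A DB B \<longleftrightarrow> (\<exists>T. quasi_sim_witness T DA A DB B)"

definition resolvent_set :: "'a::complex_normed_vector set \<Rightarrow> ('a \<Rightarrow> 'a) \<Rightarrow> complex set" where
  "resolvent_set D A = {l. inj_on (\<lambda>x. A x - l *\<^sub>C x) D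
      \<and> (\<lambda>x. A x - l *\<^sub>C x) ` D = UNIV
      \<and> (\<exists>C. \<forall>y. norm (inv_into D (\<lambda>x. A x - l *\<^sub>C x) y) \<le> C * norm y)}"

definition spectrum :: "'a::complex_normed_vector set \<Rightarrow> ('a \<Rightarrow> 'a) \<Rightarrow> complex set" where
  "spectrum D A = - resolvent_set D A"

definition point_spectrum :: "'a::complex_normed_vector set \<Rightarrow> ('a \<Rightarrow> 'a) \<Rightarrow> complex set" where
  "point_spectrum D A = {l. \<exists>x\<in>D. x \<noteq> 0 \<and> A x = l *\<^sub>C x}"

definition residual_spectrum :: "'a::complex_normed_vector set \<Rightarrow> ('a \<Rightarrow> 'a) \<Rightarrow> complex set" where
  "residual_spectrum D A = {l. inj_on (\<lambda>x. A x - l *\<^sub>C x) D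
      \<and> closure ((\<lambda>x. A x - l *\<^sub>C x) ` D) \<noteq> UNIV}"

definition eigenspace :: "'a::complex_normed_vector set \<Rightarrow> ('a \<Rightarrow> 'a) \<Rightarrow> complex \<Rightarrow> 'a set" where
  "eigenspace D A l = {x \<in> D. A x = l *\<^sub>C x}"

definition multiplicity :: "'a::complex_normed_vector set \<Rightarrow> ('a \<Rightarrow> 'a) \<Rightarrow> complex \<Rightarrow> enat" where 
  "multiplicity D A l = cdim (eigenspace D A l)"

definition is_core :: "'b::complex_normed_vector set \<Rightarrow> 'b set \<Rightarrow> ('b \<Rightarrow> 'b) \<Rightarrow> bool" where
  "is_core C DB B \<longleftrightarrow> C \<subseteq> DB \<and> closure (graph C B) = graph DB B"

end

theory Submission
  imports Defs
begin

text \<open>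
  The proof is elementary and uses no Hilbert space structure beyond normed spaces. Then:
  (i) \<open>T\<close> maps the \<open>l\<close>-eigenspace of \<open>A\<close> injectively and linearly into that of \<open>B\<close>,
      and injective linear maps do not decrease dimension;
  (ii) injectivity of \<open>B - l\<close> pulls back along \<open>T\<close>, and dense range of \<open>A - l\<close> would push
      forward (by continuity of \<open>T\<close> and density of \<open>R(T)\<close>) to dense range of \<open>B - l\<close>;
  (iii) if \<open>T D(A) = D(B)\<close>, an eigenvector of \<open>B\<close> is \<open>T\<close> of an eigenvector of \<open>A\<close>;
  (iv) approximating an eigenvector \<open>y\<close> of \<open>B\<close> in graph norm by \<open>T x\<^sub>n\<close> with \<open>x\<^sub>n \<in> D(A)\<close>,
      boundedness of \<open>T\<^sup>-\<^sup>1\<close> gives \<open>(A - l) x\<^sub>n \<rightarrow> 0\<close>; a bounded resolvent would then force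
      \<open>x\<^sub>n \<rightarrow> 0\<close>, hence \<open>y = 0\<close>.
\<close>

lemma cbounded_linear_bounded_linear:
  assumes "cbounded_linear T"
  shows "bounded_linear T"
proof -
  have add: "\<And>x y. T (x + y) = T x + T y" and scale: "\<And>c x. T (c *\<^sub>C x) = c *\<^sub>C T x"
    and bound: "\<exists>K. \<forall>x. norm (T x) \<le> norm x * K"
    using assms unfolding cbounded_linear_def by auto
  have "linear T"
  proof
    fix r x show "T (r *\<^sub>R x) = r *\<^sub>R T x" by (simp add: scaleR_scaleC scale)
  qed (simp add: add)
  with bound show ?thesis by (simp add: bounded_linear_axioms_def bounded_linear_def)
qed

lemma cbounded_linear_scaleC: "cbounded_linear T \<Longrightarrow> T (c *\<^sub>C x) = c *\<^sub>C T x"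
  unfolding cbounded_linear_def by auto

lemma bounded_linear_scaleC: "bounded_linear (\<lambda>z::'a::complex_normed_vector. l *\<^sub>C z)"
proof -
  have "linear (\<lambda>z::'a. l *\<^sub>C z)"
  proof
    fix r and x :: 'a show "l *\<^sub>C (r *\<^sub>R x) = r *\<^sub>R (l *\<^sub>C x)"
      by (simp add: scaleR_scaleC scaleC_scaleC mult.commute)
  qed (simp add: scaleC_add_right)
  moreover have "\<forall>x::'a. norm (l *\<^sub>C x) \<le> norm x * cmod l"
    by (simp add: norm_scaleC mult.commute)
  ultimately show ?thesis by (auto simp: bounded_linear_axioms_def bounded_linear_def)
qed

lemma cbounded_linear_inj_eq_0:
  assumes "cbounded_linear T" "inj T"
  shows "T x = 0 \<longleftrightarrow> x = 0"
  using assms cbounded_linear_bounded_linear bounded_linear.linear linear_0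
  by (metis injD)

lemma cindependent_image:
  fixes T :: "'a::complex_normed_vector \<Rightarrow> 'b::complex_normed_vector"
  assumes T: "cbounded_linear T" and inj: "inj T" and S: "cindependent S"
  shows "cindependent (T ` S)"
  unfolding cindependent_def
proof (intro allI impI ballI)
  fix F u y
  assume F: "finite F" "F \<subseteq> T ` S" and sum_0: "(\<Sum>x\<in>F. u x *\<^sub>C x) = 0" and y: "y \<in> F"
  have lin: "linear T" using cbounded_linear_bounded_linear[OF T] bounded_linear.linear by blast
  define G where "G = {x\<in>S. T x \<in> F}"
  have F_eq: "F = T ` G" using F unfolding G_def by auto
  have inj_G: "inj_on T G" using inj by (simp add: inj_on_def inj_def)
  have "finite G" using F(1) F_eq inj_G finite_image_iff by metis
  have "T (\<Sum>x\<in>G. u (T x) *\<^sub>C x) = (\<Sum>x\<in>G. u (T x) *\<^sub>C T x)"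
    by (simp add: linear_sum[OF lin] cbounded_linear_scaleC[OF T])
  also have "\<dots> = (\<Sum>x\<in>F. u x *\<^sub>C x)"
    unfolding F_eq by (simp add: sum.reindex[OF inj_G])
  finally have "(\<Sum>x\<in>G. u (T x) *\<^sub>C x) = 0"
    using sum_0 cbounded_linear_inj_eq_0[OF T inj] by simp
  moreover have "G \<subseteq> S" unfolding G_def by auto
  ultimately have "\<forall>x\<in>G. u (T x) = 0"
    using S \<open>finite G\<close> unfolding cindependent_def
    by (elim allE[where x=G] allE[where x="\<lambda>x. u (T x)"]) blast
  then show "u y = 0" using y F_eq by auto
qed

lemma cdim_le_image:
  fixes T :: "'a::complex_normed_vector \<Rightarrow> 'b::complex_normed_vector"
  assumes T: "cbounded_linear T" and inj: "inj T" and maps: "T ` E \<subseteq> F"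
  shows "cdim E \<le> cdim F"
  unfolding cdim_def
proof (rule SUP_least)
  fix S assume "S \<in> {S. finite S \<and> S \<subseteq> E \<and> cindependent S}"
  then have S: "finite S" "S \<subseteq> E" "cindependent S" by auto
  have "T ` S \<in> {S. finite S \<and> S \<subseteq> F \<and> cindependent S}"
    using S maps cindependent_image[OF T inj S(3)] by auto
  then have "enat (card (T ` S)) \<le> (SUP S \<in> {S. finite S \<and> S \<subseteq> F \<and> cindependent S}. enat (card S))"
    by (rule SUP_upper)
  moreover have "card (T ` S) = card S" using inj by (simp add: card_image inj_on_def inj_def)
  ultimately show "enat (card S) \<le> (SUP S \<in> {S. finite S \<and> S \<subseteq> F \<and> cindependent S}. enat (card S))"
    by simp
qed

lemma intertwining_shift:
  assumes "intertwining T DA A DB B" "x \<in> DA"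
  shows "T (A x - l *\<^sub>C x) = B (T x) - l *\<^sub>C T x"
proof -
  have T: "cbounded_linear T" and "B (T x) = T (A x)"
    using assms unfolding intertwining_def by auto
  moreover have "linear T" using cbounded_linear_bounded_linear[OF T] bounded_linear.linear by blast
  ultimately show ?thesis using linear_diff cbounded_linear_scaleC[OF T] by metis
qed

lemma intertwining_eigenspace:
  assumes "intertwining T DA A DB B"
  shows "T ` eigenspace DA A l \<subseteq> eigenspace DB B l"
  using assms cbounded_linear_scaleC unfolding intertwining_def eigenspace_def by fastforce

lemma point_spectrum_multiplicity_mono:
  assumes T: "quasi_sim_witness T DA A DB B"
  shows "point_spectrum DA A \<subseteq> point_spectrum DB B
          \<and> (\<forall>l\<in>point_spectrum DA A. multiplicity DA A l \<le> multiplicity DB B l)"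
proof -
  have tw: "intertwining T DA A DB B" and cb: "cbounded_linear T" and inj: "inj T"
    using T unfolding quasi_sim_witness_def intertwining_def by auto
  have eig: "T ` eigenspace DA A l \<subseteq> eigenspace DB B l" for l
    using intertwining_eigenspace[OF tw] .
  have "point_spectrum DA A \<subseteq> point_spectrum DB B"
  proof
    fix l assume "l \<in> point_spectrum DA A"
    then obtain x where "x \<in> eigenspace DA A l" "x \<noteq> 0"
      unfolding point_spectrum_def eigenspace_def by auto
    then have "T x \<in> eigenspace DB B l" "T x \<noteq> 0"
      using eig cbounded_linear_inj_eq_0[OF cb inj] by auto
    then show "l \<in> point_spectrum DB B" unfolding point_spectrum_def eigenspace_def by blast
  qed
  moreover have "multiplicity DA A l \<le> multiplicity DB B l" for l
    unfolding multiplicity_def using cdim_le_image[OF cb inj eig] .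
  ultimately show ?thesis by blast
qed

lemma residual_spectrum_antimono:
  assumes T: "quasi_sim_witness T DA A DB B"
  shows "residual_spectrum DB B \<subseteq> residual_spectrum DA A"
proof
  have tw: "intertwining T DA A DB B" and cb: "cbounded_linear T" and DA_DB: "T ` DA \<subseteq> DB"
    and inj: "inj T" and dense: "closure (range T) = UNIV"
    using T unfolding quasi_sim_witness_def intertwining_def densely_defined_def by auto
  fix l assume "l \<in> residual_spectrum DB B"
  then have inj_B: "inj_on (\<lambda>x. B x - l *\<^sub>C x) DB"
    and not_dense_B: "closure ((\<lambda>x. B x - l *\<^sub>C x) ` DB) \<noteq> UNIV"
    unfolding residual_spectrum_def by auto
  let ?RA = "(\<lambda>x. A x - l *\<^sub>C x) ` DA" and ?RB = "(\<lambda>x. B x - l *\<^sub>C x) ` DB"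
  have shift: "\<And>x. x \<in> DA \<Longrightarrow> T (A x - l *\<^sub>C x) = B (T x) - l *\<^sub>C T x"
    using intertwining_shift[OF tw] .
  have "inj_on (\<lambda>x. A x - l *\<^sub>C x) DA"
  proof (rule inj_onI)
    fix x y assume xy: "x \<in> DA" "y \<in> DA" "A x - l *\<^sub>C x = A y - l *\<^sub>C y"
    then have "B (T x) - l *\<^sub>C T x = B (T y) - l *\<^sub>C T y"
      using shift[OF xy(1)] shift[OF xy(2)] by simp
    then have "T x = T y" using inj_B xy DA_DB by (auto simp: inj_on_def)
    then show "x = y" using inj by (simp add: inj_eq)
  qed
  moreover have "closure ?RA \<noteq> UNIV"
  proof
    assume dense_A: "closure ?RA = UNIV"
    have "T ` ?RA \<subseteq> ?RB"
    proof (rule image_subsetI)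
      fix u assume "u \<in> ?RA"
      then obtain x where "x \<in> DA" "u = A x - l *\<^sub>C x" by blast
      then show "T u \<in> ?RB" using shift DA_DB by auto
    qed
    then have "T ` ?RA \<subseteq> closure ?RB" using closure_subset by (rule order_trans)
    moreover have "continuous_on (closure ?RA) T"
      using cbounded_linear_bounded_linear[OF cb] linear_continuous_on by blast
    ultimately have "T ` closure ?RA \<subseteq> closure ?RB"
      using image_closure_subset[OF _ closed_closure] by blast
    then have "closure (range T) \<subseteq> closure ?RB"
      using dense_A by (simp add: closure_minimal)
    then show False using dense not_dense_B by auto
  qed
  ultimately show "l \<in> residual_spectrum DA A" unfolding residual_spectrum_def by auto
qed

lemma point_spectrum_eq_if_onto_domain:
  assumes T: "quasi_sim_witness T DA A DB B" and onto: "T ` DA = DB"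
  shows "point_spectrum DB B = point_spectrum DA A"
proof
  have tw: "intertwining T DA A DB B" and cb: "cbounded_linear T" and inj: "inj T"
    using T unfolding quasi_sim_witness_def intertwining_def by auto
  show "point_spectrum DA A \<subseteq> point_spectrum DB B"
    using point_spectrum_multiplicity_mono[OF T] by blast
  show "point_spectrum DB B \<subseteq> point_spectrum DA A"
  proof
    fix l assume "l \<in> point_spectrum DB B"
    then obtain y where y: "y \<in> DB" "y \<noteq> 0" "B y = l *\<^sub>C y" unfolding point_spectrum_def by auto
    then obtain x where x: "x \<in> DA" "y = T x" using onto by auto
    have "T (A x - l *\<^sub>C x) = 0" using intertwining_shift[OF tw x(1)] x y by simp
    then have "A x = l *\<^sub>C x" using cbounded_linear_inj_eq_0[OF cb inj] by simp
    moreover have "x \<noteq> 0" using x y cbounded_linear_inj_eq_0[OF cb inj] by auto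
    ultimately show "l \<in> point_spectrum DA A" using x unfolding point_spectrum_def by blast
  qed
qed

lemma core_approximation:
  assumes "is_core C DB B" "y \<in> DB"
  obtains z where "\<And>n. z n \<in> C" "z \<longlonglongrightarrow> y" "(\<lambda>n. B (z n)) \<longlonglongrightarrow> B y"
proof -
  have "(y, B y) \<in> closure (graph C B)"
    using assms unfolding is_core_def graph_def by auto
  then obtain f where f: "\<And>n. f n \<in> graph C B" "f \<longlonglongrightarrow> (y, B y)"
    unfolding closure_sequential by blast
  have "\<forall>n. \<exists>z. z \<in> C \<and> f n = (z, B z)" using f(1) unfolding graph_def by blast
  then obtain z where z: "\<And>n. z n \<in> C" "\<And>n. f n = (z n, B (z n))" by metis
  show thesis
  proof
    show "z n \<in> C" for n by (rule z(1))
    show "z \<longlonglongrightarrow> y" using tendsto_fst[OF f(2)] by (simp add: z(2))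
    show "(\<lambda>n. B (z n)) \<longlonglongrightarrow> B y" using tendsto_snd[OF f(2)] by (simp add: z(2))
  qed
qed

lemma resolvent_bounded_below:
  assumes "l \<in> resolvent_set DA A"
  obtains R where "\<And>x. x \<in> DA \<Longrightarrow> norm x \<le> R * norm (A x - l *\<^sub>C x)"
proof -
  obtain R where R: "\<And>z. norm (inv_into DA (\<lambda>x. A x - l *\<^sub>C x) z) \<le> R * norm z"
    and inj: "inj_on (\<lambda>x. A x - l *\<^sub>C x) DA"
    using assms unfolding resolvent_set_def by auto
  show thesis
  proof
    fix x assume "x \<in> DA"
    then show "norm x \<le> R * norm (A x - l *\<^sub>C x)"
      using R[of "A x - l *\<^sub>C x"] inv_into_f_f[OF inj] by simp
  qed
qed

lemma bounded_below_null:
  assumes "\<And>n. norm (x n) \<le> C * norm (f n)" "f \<longlonglongrightarrow> 0"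
  shows "x \<longlonglongrightarrow> 0"
proof (rule Lim_null_comparison)
  show "\<forall>\<^sub>F n in sequentially. norm (x n) \<le> C * norm (f n)" using assms(1) by simp
  show "(\<lambda>n. C * norm (f n)) \<longlonglongrightarrow> 0"
    using tendsto_mult_right_zero[OF tendsto_norm_zero[OF assms(2)]] by simp
qed

lemma point_spectrum_in_spectrum_if_core:
  assumes T: "quasi_sim_witness T DA A DB B" and bounded_inv: "\<exists>C. \<forall>x. norm x \<le> C * norm (T x)"
    and core: "is_core (T ` DA) DB B"
  shows "point_spectrum DB B \<subseteq> spectrum DA A"
proof
  have tw: "intertwining T DA A DB B" and cb: "cbounded_linear T" and inj: "inj T"
    using T unfolding quasi_sim_witness_def intertwining_def by auto
  have bl: "bounded_linear T" using cbounded_linear_bounded_linear[OF cb] .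
  obtain C where C: "\<And>x. norm x \<le> C * norm (T x)" using bounded_inv by auto
  fix l assume "l \<in> point_spectrum DB B"
  then obtain y where y: "y \<in> DB" "y \<noteq> 0" "B y = l *\<^sub>C y" unfolding point_spectrum_def by auto
  obtain z where z: "\<And>n. z n \<in> T ` DA" "z \<longlonglongrightarrow> y" "(\<lambda>n. B (z n)) \<longlonglongrightarrow> B y"
    using core_approximation[OF core y(1)] by blast
  have "\<forall>n. \<exists>x. x \<in> DA \<and> z n = T x" using z(1) by blast
  then obtain x where x: "\<And>n. x n \<in> DA" "\<And>n. z n = T (x n)" by metis
  let ?u = "\<lambda>n. A (x n) - l *\<^sub>C x n"
  have "(\<lambda>n. B (z n) - l *\<^sub>C z n) \<longlonglongrightarrow> B y - l *\<^sub>C y"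
    using tendsto_diff[OF z(3) bounded_linear.tendsto[OF bounded_linear_scaleC z(2)]] .
  then have "(\<lambda>n. T (?u n)) \<longlonglongrightarrow> 0"
    using intertwining_shift[OF tw x(1)] x(2) y(3) by simp
  with C have u_null: "?u \<longlonglongrightarrow> 0" by (rule bounded_below_null)
  show "l \<in> spectrum DA A"
  proof (rule ccontr)
    assume "l \<notin> spectrum DA A"
    then obtain R where R: "\<And>x. x \<in> DA \<Longrightarrow> norm x \<le> R * norm (A x - l *\<^sub>C x)"
      using resolvent_bounded_below unfolding spectrum_def by blast
    have "x \<longlonglongrightarrow> 0" using bounded_below_null[OF R[OF x(1)] u_null] .
    then have "(\<lambda>n. T (x n)) \<longlonglongrightarrow> T 0" by (rule bounded_linear.tendsto[OF bl])
    then have "z \<longlonglongrightarrow> T 0" using x(2) by presburger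
    then have "y = T 0" using z(2) LIMSEQ_unique by blast
    then have "y = 0" using cbounded_linear_inj_eq_0[OF cb inj, of 0] by simp
    with y(2) show False by simp
  qed
qed

theorem proposition3p10:
  fixes DA :: "'h::chilbert_space set" and A :: "'h \<Rightarrow> 'h"
    and DB :: "'k::chilbert_space set" and B :: "'k \<Rightarrow> 'k"
    and T :: "'h \<Rightarrow> 'k"
  assumes A_closed: "closed_op DA A" and A_dense: "densely_defined DA"
    and B_closed: "closed_op DB B" and B_dense: "densely_defined DB"
    and T_qs: "quasi_sim_witness T DA A DB B"
  shows "(point_spectrum DA A \<subseteq> point_spectrum DB B
          \<and> (\<forall>l\<in>point_spectrum DA A. multiplicity DA A l \<le> multiplicity DB B l))
       \<and> residual_spectrum DB B \<subseteq> residual_spectrum DA A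
       \<and> (T ` DA = DB \<longrightarrow> point_spectrum DB B = point_spectrum DA A)
       \<and> ((\<exists>C. \<forall>x. norm x \<le> C * norm (T x)) \<and> is_core (T ` DA) DB B
            \<longrightarrow> point_spectrum DB B \<subseteq> spectrum DA A)"
  using point_spectrum_multiplicity_mono[OF T_qs] residual_spectrum_antimono[OF T_qs]
    point_spectrum_eq_if_onto_domain[OF T_qs] point_spectrum_in_spectrum_if_core[OF T_qs]
  by blast

end
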